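(* For monomial ideals $J\subset I\subset S_f$, with $t$ a new variable, $\operatorname{sdepth}(I/J)[t]=\operatorname{sdepth}(I/J)[t,t^{-1}]=\operatorname{sdepth}(I/J)+1$. Consequently, for new variables $t_1,\ldots,t_r$, $\operatorname{sdepth}(I/J)[t_1^{\pm1},\ldots,t_r^{\pm1}]=\operatorname{sdepth}(I/J)+r$.
   Context: Let $K$ be a field, $S=K[x_1,\ldots,x_n]$, $A\subset\{1,\ldots,n\}$, $f=\prod_{j\in A}x_j$, and $S_f=K[x_1,\ldots,x_n,x_j^{-1}: j\in A]$. A monomial ideal of $S_f$ is an ideal generated by monomials $x_1^{a_1}\cdots x_n^{a_n}$ with $a_j\in\mathbb{Z}$ for $j\in A$ and $a_j\geq 0$ for $j\notin A$. For monomial ideals $J\subset I\subset S_f$, a Stanley space of $I/J$ is a free $K[Z]$-submodule $uK[Z]$ of $I/J$, where $u$ is a monomial in $I\setminus J$ and $Z\subset\{x_1,\ldots,x_n\}\cup\{x_j^{-1}: j\in A\}$ with $\{x_j,x_j^{-1}\}\not\subseteq Z$ for all $j\in A$; its dimension is $|Z|$. A Stanley decomposition of $I/J$ is a finite direct sum of Stanley spaces $I/J=\bigoplus_{i=1}^r u_iK[Z_i]$; its Stanley depth is $\min_i|Z_i|$, and $\operatorname{sdepth}(I/J)$ is the maximum of this over all Stanley decompositions. The same definitions are used for $(I/J)[t]$ and $(I/J)[t,t^{-1}]$, viewed as quotients of monomial ideals in the (localized) polynomial ring with the extra variable $t$ (resp. $t$ inverted), and likewise with several extra variables $t_1,\ldots,t_r$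 all inverted. *)

theory Defs
  imports Main
begin

text \<open>Monomials of S_f = K[x_0..x_{n-1}, x_j^{-1} : j in A] are identified with their
exponent vectors a :: nat => int, supported on {..<n}, with a i >= 0 for i not in A.
Since monomial ideals and Stanley decompositions of I/J are determined by the sets of
monomials involved, I/J is encoded by the monomial sets of I and J.\<close>

definition mons :: "nat \<Rightarrow> nat set \<Rightarrow> (nat \<Rightarrow> int) set" where
  "mons n A = {a. (\<forall>i. n \<le> i \<longrightarrow> a i = 0) \<and> (\<forall>i<n. i \<notin> A \<longrightarrow> 0 \<le> a i)}"

definition unitv :: "nat \<Rightarrow> nat \<Rightarrow> int" where
  "unitv i = (\<lambda>k. if k = i then 1 else 0)"

definition monomial_ideal :: "nat \<Rightarrow> nat set \<Rightarrow> (nat \<Rightarrow> int) set \<Rightarrow> bool" where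
  "monomial_ideal n A I \<longleftrightarrow> I \<subseteq> mons n A \<and>
     (\<forall>a\<in>I. \<forall>i<n. (\<lambda>k. a k + unitv i k) \<in> I) \<and> (\<forall>a\<in>I. \<forall>j\<in>A. (\<lambda>k. a k - unitv j k) \<in> I)"

text \<open>A Stanley space u K[Z] is encoded by a triple (u, Zp, Zn): Zp = {i. x_i in Z},
Zn = {j. x_j^{-1} in Z}. Its monomials are u * m, m a monomial of K[Z].\<close>
definition space :: "(nat \<Rightarrow> int) \<times> nat set \<times> nat set \<Rightarrow> (nat \<Rightarrow> int) set" where
  "space s = (case s of (u, Zp, Zn) \<Rightarrow>
     {(\<lambda>k. u k + b k) | b. (\<forall>i. i \<notin> Zp \<union> Zn \<longrightarrow> b i = 0) \<and> (\<forall>i\<in>Zp. 0 \<le> b i) \<and> (\<forall>i\<in>Zn. b i \<le> 0)})"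

definition sdim :: "(nat \<Rightarrow> int) \<times> nat set \<times> nat set \<Rightarrow> nat" where
  "sdim s = (case s of (u, Zp, Zn) \<Rightarrow> card Zp + card Zn)"

definition stanley_space :: "nat \<Rightarrow> nat set \<Rightarrow> (nat \<Rightarrow> int) set \<Rightarrow> (nat \<Rightarrow> int) set
    \<Rightarrow> (nat \<Rightarrow> int) \<times> nat set \<times> nat set \<Rightarrow> bool" where
  "stanley_space n A I J s = (case s of (u, Zp, Zn) \<Rightarrow>
     Zp \<subseteq> {..<n} \<and> Zn \<subseteq> A \<and> Zp \<inter> Zn = {} \<and> u \<in> I - J \<and> space s \<subseteq> I - J)"

definition stanley_decomp :: "nat \<Rightarrow> nat set \<Rightarrow> (nat \<Rightarrow> int) set \<Rightarrow> (nat \<Rightarrow> int) set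
    \<Rightarrow> ((nat \<Rightarrow> int) \<times> nat set \<times> nat set) set \<Rightarrow> bool" where
  "stanley_decomp n A I J D \<longleftrightarrow> finite D \<and> (\<forall>s\<in>D. stanley_space n A I J s) \<and>
     (\<forall>s\<in>D. \<forall>s'\<in>D. s \<noteq> s' \<longrightarrow> space s \<inter> space s' = {}) \<and>
     (\<Union>s\<in>D. space s) = I - J"

definition sdepth :: "nat \<Rightarrow> nat set \<Rightarrow> (nat \<Rightarrow> int) set \<Rightarrow> (nat \<Rightarrow> int) set \<Rightarrow> nat" where
  "sdepth n A I J = Max {Min (sdim ` D) | D. stanley_decomp n A I J D}"

text \<open>(I)[t] with t = x_n a new (non-inverted) variable.\<close>
definition ext_poly :: "nat \<Rightarrow> (nat \<Rightarrow> int) set \<Rightarrow> (nat \<Rightarrow> int) set" where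
  "ext_poly n I = {a. (\<lambda>i. if i = n then 0 else a i) \<in> I \<and> 0 \<le> a n \<and> (\<forall>i>n. a i = 0)}"

text \<open>(I)[t_1^{+-1},...,t_r^{+-1}] with t_k = x_{n+k-1} inverted new variables.\<close>
definition ext_laurent :: "nat \<Rightarrow> nat \<Rightarrow> (nat \<Rightarrow> int) set \<Rightarrow> (nat \<Rightarrow> int) set" where
  "ext_laurent n r I = {a. (\<lambda>i. if i < n then a i else 0) \<in> I \<and> (\<forall>i. n + r \<le> i \<longrightarrow> a i = 0)}"

end

(*
  A Stanley decomposition of I/J yields one of (I/J)[t] by replacing each Stanley space u K[Z]
  with u K[Z, t], and one of (I/J)[t, t^-1] by splitting u K[Z][t, t^-1] into
  u K[Z, t] + u t^-1 K[Z, t^-1]; every dimension grows by one. Conversely, the Stanley spaces of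
  a decomposition of the extension that meet the hyperplane of t-degree 0 cut out a
  decomposition of I/J, each losing at most one dimension. Hence the Stanley depth grows by
  exactly one, and the statement for t_1, ..., t_r follows by induction on r.
  Stanley decompositions exist at all because, by Dickson's lemma, membership in a monomial
  ideal is decided by the exponents capped at a fixed bound, and the fibres of this capping are
  Stanley spaces.
*)

theory Submission
  imports Defs
begin

section \<open>Stanley spaces and monomial ideals\<close>

lemma finite_box:
  assumes "finite T"
  shows "finite {x :: nat \<Rightarrow> int. (\<forall>i. i \<notin> T \<longrightarrow> x i = 0) \<and> (\<forall>i\<in>T. lo i \<le> x i \<and> x i \<le> hi i)}"
  by (rule finite_subset[OF _ finite_set_of_finite_funs[OF assms, of "\<Union>i\<in>T. {lo i..hi i}" 0]])
    (use assms in auto)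

lemma mem_space:
  "c \<in> space (u, Zp, Zn) \<longleftrightarrow>
     (\<forall>i. (i \<in> Zp \<longrightarrow> u i \<le> c i) \<and> (i \<in> Zn \<longrightarrow> c i \<le> u i) \<and> (i \<notin> Zp \<union> Zn \<longrightarrow> c i = u i))"
  unfolding space_def by (auto intro!: exI[of _ "\<lambda>k. c k - u k"])

lemma stanley_space_iff:
  "stanley_space n A I J (u, Zp, Zn) \<longleftrightarrow>
     Zp \<subseteq> {..<n} \<and> Zn \<subseteq> A \<and> Zp \<inter> Zn = {} \<and> space (u, Zp, Zn) \<subseteq> I - J"
  by (auto simp: stanley_space_def mem_space)

lemma monomial_ideal_mons: "monomial_ideal n A I \<Longrightarrow> I \<subseteq> mons n A"
  by (simp add: monomial_ideal_def)

lemma monomial_ideal_update: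
  assumes I: "monomial_ideal n A I" and a: "a \<in> I" and i: "i < n" and v: "i \<in> A \<or> a i \<le> v"
  shows "a(i := v) \<in> I"
proof -
  have up: "a(i := a i + int m) \<in> I" for m
  proof (induction m)
    case (Suc m)
    then have "(\<lambda>k. (a(i := a i + int m)) k + unitv i k) \<in> I"
      using I i by (auto simp: monomial_ideal_def)
    also have "(\<lambda>k. (a(i := a i + int m)) k + unitv i k) = a(i := a i + int (Suc m))"
      by (auto simp: unitv_def)
    finally show ?case .
  qed (use a in simp)
  have down: "a(i := a i - int m) \<in> I" if "i \<in> A" for m
  proof (induction m)
    case (Suc m)
    then have "(\<lambda>k. (a(i := a i - int m)) k - unitv i k) \<in> I"
      using I \<open>i \<in> A\<close> by (auto simp: monomial_ideal_def)
    also have "(\<lambda>k. (a(i := a i - int m)) k - unitv i k) = a(i := a i - int (Suc m))"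
      by (auto simp: unitv_def)
    finally show ?case .
  qed (use a in simp)
  show ?thesis
  proof (cases "a i \<le> v")
    case True
    then show ?thesis using up[of "nat (v - a i)"] by simp
  next
    case False
    then show ?thesis using down[of "nat (a i - v)"] v by simp
  qed
qed

lemma monomial_ideal_upward:
  assumes I: "monomial_ideal n A I" and a: "a \<in> I" and b: "b \<in> mons n A"
    and le: "\<forall>i<n. i \<notin> A \<longrightarrow> a i \<le> b i"
  shows "b \<in> I"
proof -
  have "\<forall>c. (\<forall>i\<ge>k. c i = a i) \<longrightarrow> (\<forall>i<k. i \<in> A \<or> a i \<le> c i) \<longrightarrow> c \<in> I" if "k \<le> n" for k
    using that
  proof (induction k)
    case 0
    then show ?case using a by (auto simp: fun_eq_iff)
  next
    case (Suc k)
    show ?case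
    proof (intro allI impI)
      fix c assume "\<forall>i\<ge>Suc k. c i = a i" and c: "\<forall>i<Suc k. i \<in> A \<or> a i \<le> c i"
      then have "c(k := a k) \<in> I" using Suc by auto
      then have "(c(k := a k))(k := c k) \<in> I"
        using monomial_ideal_update[OF I, of "c(k := a k)" k "c k"] Suc.prems c by auto
      then show "c \<in> I" by simp
    qed
  qed
  moreover have "\<forall>i\<ge>n. b i = a i" "\<forall>i<n. i \<in> A \<or> a i \<le> b i"
    using a b le monomial_ideal_mons[OF I] by (auto simp: mons_def)
  ultimately show ?thesis by blast
qed

section \<open>Dickson's lemma\<close>

definition upward_closed_on :: "nat set \<Rightarrow> (nat \<Rightarrow> int) set \<Rightarrow> bool" where
  "upward_closed_on T U \<longleftrightarrow>
     (\<forall>a\<in>U. \<forall>b. (\<forall>i. i \<notin> T \<longrightarrow> b i = a i) \<and> (\<forall>i\<in>T. a i \<le> b i) \<longrightarrow> b \<in> U)"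

definition orthant :: "nat set \<Rightarrow> (nat \<Rightarrow> int) set" where
  "orthant T = {a. (\<forall>i. i \<notin> T \<longrightarrow> a i = 0) \<and> (\<forall>i\<in>T. 0 \<le> a i)}"

definition clamp :: "nat set \<Rightarrow> (nat \<Rightarrow> int) \<Rightarrow> (nat \<Rightarrow> int) \<Rightarrow> nat \<Rightarrow> int" where
  "clamp T g a = (\<lambda>i. if i \<in> T then min (a i) (g i) else a i)"

lemma upward_closed_onD:
  "upward_closed_on T U \<Longrightarrow> a \<in> U \<Longrightarrow> \<forall>i. i \<notin> T \<longrightarrow> b i = a i \<Longrightarrow> \<forall>i\<in>T. a i \<le> b i \<Longrightarrow> b \<in> U"
  unfolding upward_closed_on_def by blast

lemma upward_closed_on_slice:
  assumes "upward_closed_on (insert t T) U" "t \<notin> T"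
  shows "upward_closed_on T {a. a(t := k) \<in> U}"
  unfolding upward_closed_on_def
proof (intro ballI allI impI)
  fix a b assume "a \<in> {a. a(t := k) \<in> U}" "(\<forall>i. i \<notin> T \<longrightarrow> b i = a i) \<and> (\<forall>i\<in>T. a i \<le> b i)"
  then show "b \<in> {a. a(t := k) \<in> U}"
    using upward_closed_onD[OF assms(1), of "a(t := k)" "b(t := k)"] assms(2) by auto
qed

lemma upward_closed_on_slice_mono:
  assumes "upward_closed_on (insert t T) U" "k \<le> k'" "a(t := k) \<in> U"
  shows "a(t := k') \<in> U"
  by (rule upward_closed_onD[OF assms(1,3)]) (use assms(2) in auto)

lemma upward_closed_on_Union:
  "(\<And>k. upward_closed_on T (F k)) \<Longrightarrow> upward_closed_on T (\<Union>k\<in>K. F k)"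
  unfolding upward_closed_on_def by blast

lemma finite_subset_UN_mono:
  fixes F :: "int \<Rightarrow> 'a set"
  assumes "finite X" "X \<subseteq> (\<Union>k\<in>{0..}. F k)" "mono F"
  shows "\<exists>K\<ge>0. X \<subseteq> F K"
  using assms(1,2)
proof (induction X rule: finite_induct)
  case (insert x X)
  then obtain K k where "0 \<le> K" "X \<subseteq> F K" "0 \<le> k" "x \<in> F k"
    by auto
  moreover have "F K \<subseteq> F (max K k)" "F k \<subseteq> F (max K k)"
    using monoD[OF assms(3)] by simp_all
  ultimately show ?case
    by (intro exI[of _ "max K k"]) auto
qed (auto intro: exI[of _ 0])

lemma upward_closed_on_clamp:
  assumes "finite T" "upward_closed_on T U"
  shows "\<exists>g. \<forall>a\<in>U \<inter> orthant T. clamp T g a \<in> U"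
  using assms
proof (induction T arbitrary: U rule: finite_induct)
  case empty
  show ?case by (simp add: clamp_def)
next
  case (insert t T)
  let ?slice = "\<lambda>k. {a. a(t := k) \<in> U}"
  have slice: "upward_closed_on T (?slice k)" for k
    by (rule upward_closed_on_slice[OF insert.prems insert.hyps(2)])
  have "upward_closed_on T (\<Union>k\<in>{0..}. ?slice k)"
    by (rule upward_closed_on_Union[OF slice])
  from insert.IH[OF this]
  obtain g where g: "\<forall>a\<in>(\<Union>k\<in>{0..}. ?slice k) \<inter> orthant T. clamp T g a \<in> (\<Union>k\<in>{0..}. ?slice k)" ..
  define X where "X = clamp T g ` ((\<Union>k\<in>{0..}. ?slice k) \<inter> orthant T)"
  have "X \<subseteq> {x. (\<forall>i. i \<notin> T \<longrightarrow> x i = 0) \<and> (\<forall>i\<in>T. min 0 (g i) \<le> x i \<and> x i \<le> g i)}"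
    by (auto simp: X_def clamp_def orthant_def)
  then have "finite X"
    by (rule finite_subset) (rule finite_box[OF insert.hyps(1)])
  moreover have "X \<subseteq> (\<Union>k\<in>{0..}. ?slice k)"
    using g by (auto simp: X_def)
  moreover have "mono ?slice"
    by (rule monoI) (auto intro: upward_closed_on_slice_mono[OF insert.prems])
  ultimately obtain K where K: "0 \<le> K" "X \<subseteq> ?slice K"
    using finite_subset_UN_mono by blast
  have "\<forall>k\<in>{0..K}. \<exists>h. \<forall>a\<in>?slice k \<inter> orthant T. clamp T h a \<in> ?slice k"
    using insert.IH[OF slice] by blast
  then obtain h where h: "\<forall>k\<in>{0..K}. \<forall>a\<in>?slice k \<inter> orthant T. clamp T (h k) a \<in> ?slice k"
    by (rule bchoice[elim_format]) blast
  txt \<open>Levels k \<ge> K are handled by g, because slice K already contains every g-capped point of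
    the union; each of the finitely many levels below K by its own bound h k.\<close>
  define G where "G i = (if i = t then K else Max (insert (g i) ((\<lambda>k. h k i) ` {0..K})))" for i
  have G: "G t = K" "i \<noteq> t \<Longrightarrow> g i \<le> G i" "i \<noteq> t \<Longrightarrow> k \<in> {0..K} \<Longrightarrow> h k i \<le> G i" for i k
    by (auto simp: G_def intro!: max.coboundedI2 Max_ge)
  have dominate: "clamp (insert t T) G a \<in> U"
    if "(clamp T f (a(t := 0)))(t := k) \<in> U" "\<forall>i. i \<noteq> t \<longrightarrow> f i \<le> G i" "k \<le> a t" "k \<le> K"
    for a f k
    by (rule upward_closed_onD[OF insert.prems that(1)])
      (use that insert.hyps(2) G(1) in \<open>auto simp: clamp_def\<close>)
  show ?case
  proof (intro exI ballI)
    fix a assume a: "a \<in> U \<inter> orthant (insert t T)"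
    then have a0: "a(t := 0) \<in> ?slice (a t) \<inter> orthant T" "0 \<le> a t"
      using insert.hyps(2) by (auto simp: orthant_def)
    show "clamp (insert t T) G a \<in> U"
    proof (cases "K \<le> a t")
      case True
      have "a(t := 0) \<in> (\<Union>k\<in>{0..}. ?slice k) \<inter> orthant T"
        using a0 by blast
      then have "clamp T g (a(t := 0)) \<in> X"
        unfolding X_def by (rule imageI)
      then show ?thesis
        using K(2) G(2) True by (intro dominate[of g _ K]) auto
    next
      case False
      then show ?thesis
        using h a0 G(3)[of _ "a t"] by (intro dominate[of "h (a t)" _ "a t"]) auto
    qed
  qed
qed

lemma monomial_ideal_upward_closed_on:
  assumes I: "monomial_ideal n A I"
  shows "upward_closed_on ({..<n} - A) I"
  unfolding upward_closed_on_def
proof (intro ballI allI impI)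
  fix a b assume a: "a \<in> I" and ab: "(\<forall>i. i \<notin> {..<n} - A \<longrightarrow> b i = a i) \<and> (\<forall>i\<in>{..<n} - A. a i \<le> b i)"
  have "b \<in> mons n A"
    using a ab monomial_ideal_mons[OF I] unfolding mons_def by force
  then show "b \<in> I"
    using monomial_ideal_upward[OF I a] ab by auto
qed

section \<open>Existence of Stanley decompositions\<close>

text \<open>For g large enough, membership in a monomial ideal factors through trunc, and its fibres
  are the Stanley spaces trunc_space.\<close>
definition trunc :: "nat \<Rightarrow> nat set \<Rightarrow> (nat \<Rightarrow> int) \<Rightarrow> (nat \<Rightarrow> int) \<Rightarrow> nat \<Rightarrow> int" where
  "trunc n A g c =
     (\<lambda>i. if i \<in> A then (if 0 \<le> c i then 0 else -1) else if i < n then min (c i) (g i) else c i)"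

lemma trunc_idem: "trunc n A g (trunc n A g c) = trunc n A g c"
  by (auto simp: trunc_def fun_eq_iff)

lemma trunc_mons: "A \<subseteq> {..<n} \<Longrightarrow> \<forall>i. 0 \<le> g i \<Longrightarrow> c \<in> mons n A \<Longrightarrow> trunc n A g c \<in> mons n A"
  by (auto simp: trunc_def mons_def le_fun_def)

lemma monomial_ideal_trunc_bound:
  assumes I: "monomial_ideal n A I" and A: "A \<subseteq> {..<n}"
  shows "\<exists>g. (\<forall>i. 0 \<le> g i) \<and> (\<forall>h c. g \<le> h \<longrightarrow> c \<in> mons n A \<longrightarrow> (c \<in> I \<longleftrightarrow> trunc n A h c \<in> I))"
proof -
  obtain g where g: "\<forall>a\<in>I \<inter> orthant ({..<n} - A). clamp ({..<n} - A) g a \<in> I"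
    using upward_closed_on_clamp[OF _ monomial_ideal_upward_closed_on[OF I]] by blast
  have "c \<in> I \<longleftrightarrow> trunc n A h c \<in> I" if gh: "(\<lambda>i. max 0 (g i)) \<le> h" and c: "c \<in> mons n A" for h c
  proof
    assume "c \<in> I"
    define z where "z = (\<lambda>i. if i \<in> A then 0 else c i)"
    have "z \<in> mons n A"
      using c by (auto simp: z_def mons_def)
    then have "z \<in> I"
      using monomial_ideal_upward[OF I \<open>c \<in> I\<close>] by (auto simp: z_def)
    moreover have "z \<in> orthant ({..<n} - A)"
      using c A by (auto simp: z_def mons_def orthant_def)
    ultimately have "clamp ({..<n} - A) g z \<in> I"
      using g by blast
    moreover have "trunc n A h c \<in> mons n A"
      using gh by (intro trunc_mons[OF A _ c]) (auto simp: le_fun_def intro: order_trans)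
    ultimately show "trunc n A h c \<in> I"
      using gh by (elim monomial_ideal_upward[OF I])
        (auto simp: clamp_def trunc_def z_def le_fun_def min_def intro: order_trans)
  next
    assume "trunc n A h c \<in> I"
    then show "c \<in> I"
      by (rule monomial_ideal_upward[OF I _ c]) (auto simp: trunc_def)
  qed
  then show ?thesis
    by (intro exI[of _ "\<lambda>i. max 0 (g i)"]) (auto simp: le_fun_def)
qed

definition trunc_space :: "nat \<Rightarrow> nat set \<Rightarrow> (nat \<Rightarrow> int) \<Rightarrow> (nat \<Rightarrow> int) \<Rightarrow> (nat \<Rightarrow> int) \<times> nat set \<times> nat set" where
  "trunc_space n A g a = (a, {i. i < n \<and> (if i \<in> A then a i = 0 else a i = g i)}, {i\<in>A. a i = -1})"

lemma space_trunc_space: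
  assumes A: "A \<subseteq> {..<n}" and g: "\<forall>i. 0 \<le> g i" and a: "a \<in> mons n A" "trunc n A g a = a"
  shows "space (trunc_space n A g a) = {c \<in> mons n A. trunc n A g c = a}"
proof -
  have pointwise: "(i < n \<and> (if i \<in> A then a i = 0 else a i = g i) \<longrightarrow> a i \<le> c i) \<and>
        (i \<in> A \<and> a i = -1 \<longrightarrow> c i \<le> a i) \<and>
        (\<not> (i < n \<and> (if i \<in> A then a i = 0 else a i = g i) \<or> i \<in> A \<and> a i = -1) \<longrightarrow> c i = a i)
      \<longleftrightarrow> (n \<le> i \<longrightarrow> c i = 0) \<and> (i < n \<and> i \<notin> A \<longrightarrow> 0 \<le> c i) \<and> trunc n A g c i = a i" for c i
    using a(1) fun_cong[OF a(2), of i] g A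
    by (cases "i < n") (auto simp: trunc_def mons_def min_def split: if_splits)
  have "c \<in> space (trunc_space n A g a) \<longleftrightarrow> c \<in> mons n A \<and> trunc n A g c = a" for c
  proof -
    have "c \<in> space (trunc_space n A g a) \<longleftrightarrow>
        (\<forall>i. (n \<le> i \<longrightarrow> c i = 0) \<and> (i < n \<and> i \<notin> A \<longrightarrow> 0 \<le> c i) \<and> trunc n A g c i = a i)"
      unfolding trunc_space_def mem_space mem_Collect_eq Un_iff by (intro all_cong1 pointwise)
    also have "\<dots> \<longleftrightarrow> c \<in> mons n A \<and> trunc n A g c = a"
      by (auto simp: mons_def fun_eq_iff)
    finally show ?thesis .
  qed
  then show ?thesis by blast
qed

lemma finite_trunc_fixpoints: "finite {a \<in> mons n A. trunc n A g a = a}"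
proof (rule finite_subset)
  show "{a \<in> mons n A. trunc n A g a = a} \<subseteq>
      {x. (\<forall>i. i \<notin> {..<n} \<longrightarrow> x i = 0) \<and> (\<forall>i\<in>{..<n}. -1 \<le> x i \<and> x i \<le> max 0 (g i))}"
  proof clarify
    fix a assume a: "a \<in> mons n A" "trunc n A g a = a"
    have "-1 \<le> a i \<and> a i \<le> max 0 (g i)" if "i < n" for i
      using fun_cong[OF a(2), of i] a(1) that by (auto simp: trunc_def mons_def split: if_splits)
    then show "(\<forall>i. i \<notin> {..<n} \<longrightarrow> a i = 0) \<and> (\<forall>i\<in>{..<n}. -1 \<le> a i \<and> a i \<le> max 0 (g i))"
      using a(1) by (simp add: mons_def)
  qed
qed (rule finite_box, simp)

lemma stanley_decompI:
  assumes "finite D" "\<And>s. s \<in> D \<Longrightarrow> stanley_space n A I J s"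
    and "\<And>s s'. s \<in> D \<Longrightarrow> s' \<in> D \<Longrightarrow> s \<noteq> s' \<Longrightarrow> space s \<inter> space s' = {}"
    and "\<And>c. c \<in> I - J \<Longrightarrow> \<exists>s\<in>D. c \<in> space s"
  shows "stanley_decomp n A I J D"
  unfolding stanley_decomp_def
proof (intro conjI ballI impI equalityI subsetI)
  show "c \<in> I - J" if "c \<in> (\<Union>s\<in>D. space s)" for c
    using that assms(2) by (force simp: stanley_space_def)
  show "c \<in> (\<Union>s\<in>D. space s)" if "c \<in> I - J" for c
    using assms(4)[OF that] by blast
qed (use assms in auto)

lemma stanley_decomp_exists:
  assumes A: "A \<subseteq> {..<n}" and I: "monomial_ideal n A I" and J: "monomial_ideal n A J"
  shows "\<exists>D. stanley_decomp n A I J D"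
proof -
  obtain gI gJ where gI: "\<forall>i. 0 \<le> gI i" "\<forall>h c. gI \<le> h \<longrightarrow> c \<in> mons n A \<longrightarrow> (c \<in> I \<longleftrightarrow> trunc n A h c \<in> I)"
    and gJ: "\<forall>h c. gJ \<le> h \<longrightarrow> c \<in> mons n A \<longrightarrow> (c \<in> J \<longleftrightarrow> trunc n A h c \<in> J)"
    using monomial_ideal_trunc_bound[OF I A] monomial_ideal_trunc_bound[OF J A] by blast
  define g where "g = sup gI gJ"
  have g: "\<forall>i. 0 \<le> g i"
    using gI(1) by (simp add: g_def le_supI1)
  have IJ: "c \<in> I - J \<longleftrightarrow> trunc n A g c \<in> I - J" if "c \<in> mons n A" for c
    using gI(2) gJ that by (simp add: g_def) (meson sup.cobounded1 sup.cobounded2)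
  define B where "B = {a \<in> I - J. trunc n A g a = a}"
  have B_mons: "B \<subseteq> mons n A"
    using monomial_ideal_mons[OF I] by (auto simp: B_def)
  have space_B: "space (trunc_space n A g a) = {c \<in> mons n A. trunc n A g c = a}" if "a \<in> B" for a
    using space_trunc_space[OF A g] that B_mons by (auto simp: B_def)
  have "stanley_decomp n A I J (trunc_space n A g ` B)"
  proof (rule stanley_decompI)
    have "B \<subseteq> {a \<in> mons n A. trunc n A g a = a}"
      using B_mons by (auto simp: B_def)
    then show "finite (trunc_space n A g ` B)"
      using finite_trunc_fixpoints finite_subset by blast
    have "space (trunc_space n A g a) \<subseteq> I - J" if "a \<in> B" for a
      using that IJ by (auto simp: space_B B_def)
    then show "stanley_space n A I J s" if "s \<in> trunc_space n A g ` B" for s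
      using that A by (auto simp: trunc_space_def stanley_space_iff)
    show "space s \<inter> space s' = {}" if "s \<in> trunc_space n A g ` B" "s' \<in> trunc_space n A g ` B" "s \<noteq> s'"
      for s s'
      using that space_B by auto
    show "\<exists>s\<in>trunc_space n A g ` B. c \<in> space s" if c: "c \<in> I - J" for c
    proof -
      have "c \<in> mons n A"
        using c monomial_ideal_mons[OF I] by blast
      then have "trunc n A g c \<in> B" "c \<in> space (trunc_space n A g (trunc n A g c))"
        using c IJ trunc_idem by (simp_all add: B_def space_B)
      then show ?thesis
        by blast
    qed
  qed
  then show ?thesis ..
qed

section \<open>Comparing Stanley depths\<close>

lemma sdim_le:
  assumes "stanley_space n A I J s" "A \<subseteq> {..<n}"
  shows "sdim s \<le> n"
proof -
  obtain u Zp Zn where s: "s = (u, Zp, Zn)" by (cases s)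
  then have "Zp \<union> Zn \<subseteq> {..<n}" "Zp \<inter> Zn = {}"
    using assms by (auto simp: stanley_space_iff)
  then have "card Zp + card Zn \<le> n"
    by (metis card_Un_disjoint card_lessThan card_mono finite_lessThan finite_subset le_supE)
  then show ?thesis by (simp add: s sdim_def)
qed

lemma finite_sdepth_values:
  assumes "A \<subseteq> {..<n}"
  shows "finite {Min (sdim ` D) | D. stanley_decomp n A I J D}"
proof -
  txt \<open>The empty decomposition, possible only when I - J = {}, contributes the junk value Min {}.\<close>
  have "Min (sdim ` D) \<in> insert (Min {}) {..n}" if D: "stanley_decomp n A I J D" for D
  proof (cases "D = {}")
    case False
    then obtain s where "s \<in> D" by blast
    moreover have "sdim s \<le> n"
      using D \<open>s \<in> D\<close> by (intro sdim_le[OF _ assms, where I=I and J=J]) (simp add: stanley_decomp_def)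
    ultimately have "Min (sdim ` D) \<le> sdim s" "sdim s \<le> n"
      using D by (simp_all add: stanley_decomp_def)
    then show ?thesis by simp
  qed simp
  then have "{Min (sdim ` D) | D. stanley_decomp n A I J D} \<subseteq> insert (Min {}) {..n}"
    by blast
  then show ?thesis
    by (rule finite_subset) simp
qed

lemma Min_sdim_le:
  assumes "stanley_decomp n A I J D" "stanley_decomp n' A' I' J' D'" "I' - J' \<noteq> {}"
    and "\<forall>s'\<in>D'. \<exists>s\<in>D. sdim s + k \<le> sdim s' + l"
  shows "Min (sdim ` D) + k \<le> Min (sdim ` D') + l"
proof -
  have "finite D'" "D' \<noteq> {}"
    using assms(2,3) by (auto simp: stanley_decomp_def)
  then have "Min (sdim ` D') \<in> sdim ` D'"
    by (intro Min_in) auto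
  then obtain s' where "s' \<in> D'" "Min (sdim ` D') = sdim s'"
    by (metis imageE)
  moreover obtain s where "s \<in> D" "sdim s + k \<le> sdim s' + l"
    using assms(4) \<open>s' \<in> D'\<close> by blast
  moreover have "Min (sdim ` D) \<le> sdim s"
    using assms(1) \<open>s \<in> D\<close> by (simp add: stanley_decomp_def)
  ultimately show ?thesis by linarith
qed

lemma Max_eq_Max_plus_1:
  fixes S S' :: "nat set"
  assumes "finite S" "finite S'" "S \<noteq> {}"
    and "\<forall>x\<in>S. \<exists>y\<in>S'. x < y" and "\<forall>y\<in>S'. \<exists>x\<in>S. y \<le> x + 1"
  shows "Max S' = Max S + 1"
proof -
  obtain y where "y \<in> S'" "Max S < y"
    using assms(4) Max_in[OF assms(1,3)] by blast
  then have "Max S < Max S'"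
    using Max_ge[OF assms(2) \<open>y \<in> S'\<close>] by linarith
  moreover obtain x where "x \<in> S" "Max S' \<le> x + 1"
    using assms(5) Max_in[OF assms(2)] \<open>y \<in> S'\<close> by blast
  then have "Max S' \<le> Max S + 1"
    using Max_ge[OF assms(1) \<open>x \<in> S\<close>] by linarith
  ultimately show ?thesis by simp
qed

lemma sdepth_eq_plus_1:
  assumes "A \<subseteq> {..<n}" "A' \<subseteq> {..<n'}" "I - J \<noteq> {}" "I' - J' \<noteq> {}"
    and "\<exists>D. stanley_decomp n A I J D"
    and "\<And>D. stanley_decomp n A I J D \<Longrightarrow>
      \<exists>D'. stanley_decomp n' A' I' J' D' \<and> (\<forall>s'\<in>D'. \<exists>s\<in>D. sdim s + 1 \<le> sdim s')"
    and "\<And>D'. stanley_decomp n' A' I' J' D' \<Longrightarrow>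
      \<exists>D. stanley_decomp n A I J D \<and> (\<forall>s\<in>D. \<exists>s'\<in>D'. sdim s' \<le> sdim s + 1)"
  shows "sdepth n' A' I' J' = sdepth n A I J + 1"
  unfolding sdepth_def
proof (rule Max_eq_Max_plus_1)
  show "\<forall>x\<in>{Min (sdim ` D) | D. stanley_decomp n A I J D}.
      \<exists>y\<in>{Min (sdim ` D') | D'. stanley_decomp n' A' I' J' D'}. x < y"
  proof clarify
    fix D assume D: "stanley_decomp n A I J D"
    then obtain D' where D': "stanley_decomp n' A' I' J' D'"
      and "\<forall>s'\<in>D'. \<exists>s\<in>D. sdim s + 1 \<le> sdim s'"
      using assms(6) by blast
    then have "Min (sdim ` D) + 1 \<le> Min (sdim ` D') + 0"
      by (intro Min_sdim_le[OF D D' assms(4)]) simp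
    then show "\<exists>y\<in>{Min (sdim ` D') | D'. stanley_decomp n' A' I' J' D'}. Min (sdim ` D) < y"
      using D' by auto
  qed
  show "\<forall>y\<in>{Min (sdim ` D') | D'. stanley_decomp n' A' I' J' D'}.
      \<exists>x\<in>{Min (sdim ` D) | D. stanley_decomp n A I J D}. y \<le> x + 1"
  proof clarify
    fix D' assume D': "stanley_decomp n' A' I' J' D'"
    then obtain D where D: "stanley_decomp n A I J D"
      and "\<forall>s\<in>D. \<exists>s'\<in>D'. sdim s' + 0 \<le> sdim s + 1"
      using assms(7) by auto
    have "Min (sdim ` D') + 0 \<le> Min (sdim ` D) + 1"
      by (rule Min_sdim_le[OF D' D assms(3)]) fact
    then show "\<exists>x\<in>{Min (sdim ` D) | D. stanley_decomp n A I J D}. Min (sdim ` D') \<le> x + 1"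
      using D by auto
  qed
qed (use assms(1,2,5) finite_sdepth_values in auto)

section \<open>Adjoining a variable\<close>

text \<open>With t = x_n, adjoin_var n False X is X[t] and adjoin_var n True X is X[t, t^-1].\<close>
definition adjoin_var :: "nat \<Rightarrow> bool \<Rightarrow> (nat \<Rightarrow> int) set \<Rightarrow> (nat \<Rightarrow> int) set" where
  "adjoin_var n laurent X = {c. c(n := 0) \<in> X \<and> (laurent \<or> 0 \<le> c n)}"

lemma adjoin_var_hyperplane: "c n = 0 \<Longrightarrow> c \<in> adjoin_var n laurent X \<longleftrightarrow> c \<in> X"
  by (simp add: adjoin_var_def fun_upd_idem)

lemma stanley_space_mons:
  assumes "stanley_space n A I J (u, Zp, Zn)" "A \<subseteq> {..<n}" "I \<subseteq> mons n A"
  shows "u n = 0" "n \<notin> Zp" "n \<notin> Zn" "finite Zp" "finite Zn"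
proof -
  have "u \<in> space (u, Zp, Zn)"
    by (simp add: mem_space)
  then show "u n = 0"
    using assms by (auto simp: stanley_space_iff mons_def)
  have "Zp \<subseteq> {..<n}" "Zn \<subseteq> {..<n}"
    using assms(1,2) by (auto simp: stanley_space_iff)
  then show "n \<notin> Zp" "n \<notin> Zn" "finite Zp" "finite Zn"
    by (auto intro: finite_subset)
qed

text \<open>For s = (u, Zp, Zn), the space u K[Z][t, t^-1] splits into lift_space n True s = u K[Z, t]
  and lift_space n False s = u t^-1 K[Z, t^-1].\<close>
definition lift_space :: "nat \<Rightarrow> bool \<Rightarrow> (nat \<Rightarrow> int) \<times> nat set \<times> nat set \<Rightarrow> (nat \<Rightarrow> int) \<times> nat set \<times> nat set" where
  "lift_space n b s = (case s of (u, Zp, Zn) \<Rightarrow>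
     if b then (u, insert n Zp, Zn) else (u(n := -1), Zp, insert n Zn))"

lemma space_lift_space:
  assumes "stanley_space n A I J s" "A \<subseteq> {..<n}" "I \<subseteq> mons n A"
  shows "space (lift_space n b s) = {c. c(n := 0) \<in> space s \<and> (0 \<le> c n \<longleftrightarrow> b)}"
proof -
  obtain u Zp Zn where us: "s = (u, Zp, Zn)"
    by (cases s)
  then show ?thesis
    using stanley_space_mons[OF assms[unfolded us]]
    by (cases b) (auto simp: us lift_space_def mem_space split: if_splits)
qed

lemma sdim_lift_space:
  assumes "stanley_space n A I J s" "A \<subseteq> {..<n}" "I \<subseteq> mons n A"
  shows "sdim (lift_space n b s) = sdim s + 1"
proof -
  obtain u Zp Zn where us: "s = (u, Zp, Zn)"
    by (cases s)
  then show ?thesis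
    using stanley_space_mons[OF assms[unfolded us]] by (simp add: lift_space_def sdim_def)
qed

lemma stanley_space_lift_space:
  assumes s: "stanley_space n A I J s" and A: "A \<subseteq> {..<n}" and IM: "I \<subseteq> mons n A"
    and b: "laurent \<or> b"
  shows "stanley_space (Suc n) (if laurent then insert n A else A)
    (adjoin_var n laurent I) (adjoin_var n laurent J) (lift_space n b s)"
proof -
  obtain u Zp Zn where us: "s = (u, Zp, Zn)"
    by (cases s)
  have "space s \<subseteq> I - J"
    using s by (simp add: us stanley_space_iff)
  then have "space (lift_space n b s) \<subseteq> adjoin_var n laurent I - adjoin_var n laurent J"
    using b unfolding space_lift_space[OF s A IM] by (auto simp: adjoin_var_def)
  then show ?thesis
    using s stanley_space_mons[OF s[unfolded us] A IM] b A
    by (auto simp: us lift_space_def stanley_space_iff)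
qed

definition slice_space :: "nat \<Rightarrow> (nat \<Rightarrow> int) \<times> nat set \<times> nat set \<Rightarrow> (nat \<Rightarrow> int) \<times> nat set \<times> nat set" where
  "slice_space n s = (case s of (u, Zp, Zn) \<Rightarrow> (u(n := 0), Zp - {n}, Zn - {n}))"

lemma space_slice_space:
  assumes "c0 \<in> space s" "c0 n = 0"
  shows "space (slice_space n s) = {c \<in> space s. c n = 0}"
proof -
  obtain u Zp Zn where us: "s = (u, Zp, Zn)"
    by (cases s)
  have "(n \<in> Zp \<longrightarrow> u n \<le> 0) \<and> (n \<in> Zn \<longrightarrow> 0 \<le> u n) \<and> (n \<notin> Zp \<union> Zn \<longrightarrow> u n = 0)"
    using assms unfolding us mem_space by metis
  then have pointwise: "(i \<in> Zp - {n} \<longrightarrow> (u(n := 0)) i \<le> c i) \<and> (i \<in> Zn - {n} \<longrightarrow> c i \<le> (u(n := 0)) i) \<and>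
      (i \<notin> (Zp - {n}) \<union> (Zn - {n}) \<longrightarrow> c i = (u(n := 0)) i) \<longleftrightarrow>
    ((i \<in> Zp \<longrightarrow> u i \<le> c i) \<and> (i \<in> Zn \<longrightarrow> c i \<le> u i) \<and> (i \<notin> Zp \<union> Zn \<longrightarrow> c i = u i)) \<and>
      (i = n \<longrightarrow> c i = 0)" for c i
    by (cases "i = n") auto
  have "c \<in> space (slice_space n s) \<longleftrightarrow> c \<in> space s \<and> c n = 0" for c
  proof -
    have "c \<in> space (slice_space n s) \<longleftrightarrow>
        (\<forall>i. ((i \<in> Zp \<longrightarrow> u i \<le> c i) \<and> (i \<in> Zn \<longrightarrow> c i \<le> u i) \<and> (i \<notin> Zp \<union> Zn \<longrightarrow> c i = u i)) \<and>
          (i = n \<longrightarrow> c i = 0))"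
      unfolding us slice_space_def prod.case mem_space by (intro all_cong1 pointwise)
    also have "\<dots> \<longleftrightarrow> c \<in> space s \<and> c n = 0"
      unfolding us mem_space by blast
    finally show ?thesis .
  qed
  then show ?thesis by blast
qed

lemma stanley_space_slice_space:
  assumes s: "stanley_space (Suc n) A' (adjoin_var n laurent I) (adjoin_var n laurent J) s"
    and A': "A' \<subseteq> insert n A" and c0: "c0 \<in> space s" "c0 n = 0"
  shows "stanley_space n A I J (slice_space n s)"
proof -
  obtain u Zp Zn where us: "s = (u, Zp, Zn)"
    by (cases s)
  have Z: "Zp \<subseteq> {..<Suc n}" "Zn \<subseteq> insert n A" "Zp \<inter> Zn = {}"
    and sub: "space s \<subseteq> adjoin_var n laurent I - adjoin_var n laurent J"
    using s A' by (auto simp: us stanley_space_iff)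
  have "space (slice_space n s) \<subseteq> I - J"
    using sub adjoin_var_hyperplane by (auto simp: space_slice_space[OF c0])
  then show ?thesis
    using Z by (auto simp: us slice_space_def stanley_space_iff)
qed

lemma sdim_slice_space:
  assumes "stanley_space m A' I J s" "finite A'"
  shows "sdim s \<le> sdim (slice_space n s) + 1"
proof -
  obtain u Zp Zn where us: "s = (u, Zp, Zn)"
    by (cases s)
  have "finite Zp" "finite Zn" "Zp \<inter> Zn = {}"
    using assms by (auto simp: us stanley_space_iff intro: finite_subset)
  then show ?thesis
    by (cases "n \<in> Zp"; cases "n \<in> Zn") (auto simp: us slice_space_def sdim_def card_Diff_singleton_if)
qed

lemma stanley_decomp_lift:
  assumes A: "A \<subseteq> {..<n}" and IM: "I \<subseteq> mons n A" and D: "stanley_decomp n A I J D"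
  shows "stanley_decomp (Suc n) (if laurent then insert n A else A) (adjoin_var n laurent I)
    (adjoin_var n laurent J) (case_prod (lift_space n) ` ({b. laurent \<or> b} \<times> D))"
proof (rule stanley_decompI)
  have D_spaces: "stanley_space n A I J s" if "s \<in> D" for s
    using D that by (simp add: stanley_decomp_def)
  show "finite (case_prod (lift_space n) ` ({b. laurent \<or> b} \<times> D))"
    using D by (simp add: stanley_decomp_def)
  show "stanley_space (Suc n) (if laurent then insert n A else A) (adjoin_var n laurent I)
      (adjoin_var n laurent J) s'" if s': "s' \<in> case_prod (lift_space n) ` ({b. laurent \<or> b} \<times> D)" for s'
  proof -
    obtain p where "p \<in> {b. laurent \<or> b} \<times> D" "s' = case_prod (lift_space n) p"
      using s' by (rule imageE)
    then show ?thesis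
      using stanley_space_lift_space[OF D_spaces A IM] by (cases p) simp
  qed
  show "space s1 \<inter> space s2 = {}"
    if s12: "s1 \<in> case_prod (lift_space n) ` ({b. laurent \<or> b} \<times> D)"
      "s2 \<in> case_prod (lift_space n) ` ({b. laurent \<or> b} \<times> D)" "s1 \<noteq> s2" for s1 s2
  proof -
    obtain p1 p2 where p: "p1 \<in> {b. laurent \<or> b} \<times> D" "p2 \<in> {b. laurent \<or> b} \<times> D"
      "s1 = case_prod (lift_space n) p1" "s2 = case_prod (lift_space n) p2"
      using s12(1,2) by (meson imageE)
    obtain b1 t1 b2 t2 where "p1 = (b1, t1)" "p2 = (b2, t2)"
      by (cases p1, cases p2)
    then have t: "t1 \<in> D" "t2 \<in> D" "s1 = lift_space n b1 t1" "s2 = lift_space n b2 t2"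
      using p by auto
    moreover have "b1 \<noteq> b2 \<or> t1 \<noteq> t2"
      using t s12(3) by blast
    moreover have "t1 \<noteq> t2 \<Longrightarrow> space t1 \<inter> space t2 = {}"
      using D t(1,2) by (simp add: stanley_decomp_def)
    ultimately show ?thesis
      using space_lift_space[OF D_spaces A IM] by blast
  qed
  show "\<exists>s'\<in>case_prod (lift_space n) ` ({b. laurent \<or> b} \<times> D). c \<in> space s'"
    if c: "c \<in> adjoin_var n laurent I - adjoin_var n laurent J" for c
  proof -
    have "c(n := 0) \<in> I - J" "laurent \<or> 0 \<le> c n"
      using c by (auto simp: adjoin_var_def)
    moreover have "(\<Union>s\<in>D. space s) = I - J"
      using D by (simp add: stanley_decomp_def)
    ultimately obtain s where "s \<in> D" "c(n := 0) \<in> space s"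
      by blast
    then show ?thesis
      using space_lift_space[OF D_spaces A IM] \<open>laurent \<or> 0 \<le> c n\<close> by (intro bexI[of _ "lift_space n (0 \<le> c n) s"]) auto
  qed
qed

lemma stanley_decomp_slice:
  assumes A': "A' \<subseteq> insert n A" and IM: "I \<subseteq> mons n A"
    and D': "stanley_decomp (Suc n) A' (adjoin_var n laurent I) (adjoin_var n laurent J) D'"
  shows "stanley_decomp n A I J (slice_space n ` {s \<in> D'. \<exists>c\<in>space s. c n = 0})"
proof (rule stanley_decompI)
  have D'_spaces: "stanley_space (Suc n) A' (adjoin_var n laurent I) (adjoin_var n laurent J) s"
    if "s \<in> D'" for s
    using D' that by (simp add: stanley_decomp_def)
  show "finite (slice_space n ` {s \<in> D'. \<exists>c\<in>space s. c n = 0})"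
    using D' by (simp add: stanley_decomp_def)
  show "stanley_space n A I J s" if s: "s \<in> slice_space n ` {s \<in> D'. \<exists>c\<in>space s. c n = 0}" for s
  proof -
    obtain t c where t: "t \<in> D'" "s = slice_space n t" "c \<in> space t" "c n = 0"
      using s by blast
    show ?thesis
      unfolding t(2) by (rule stanley_space_slice_space[OF D'_spaces[OF t(1)] A' t(3,4)])
  qed
  show "space s1 \<inter> space s2 = {}"
    if s12: "s1 \<in> slice_space n ` {s \<in> D'. \<exists>c\<in>space s. c n = 0}"
      "s2 \<in> slice_space n ` {s \<in> D'. \<exists>c\<in>space s. c n = 0}" "s1 \<noteq> s2" for s1 s2
  proof -
    obtain t1 t2 c1 c2 where t: "t1 \<in> D'" "t2 \<in> D'" "s1 = slice_space n t1" "s2 = slice_space n t2"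
      and c: "c1 \<in> space t1" "c1 n = 0" "c2 \<in> space t2" "c2 n = 0"
      using s12(1,2) by blast
    then have "t1 \<noteq> t2"
      using s12(3) by blast
    then have "space t1 \<inter> space t2 = {}"
      using D' t(1,2) unfolding stanley_decomp_def by blast
    then show ?thesis
      using space_slice_space[OF c(1,2)] space_slice_space[OF c(3,4)] t(3,4) by auto
  qed
  show "\<exists>s\<in>slice_space n ` {s \<in> D'. \<exists>c\<in>space s. c n = 0}. c \<in> space s" if c: "c \<in> I - J" for c
  proof -
    have "c n = 0"
      using c IM by (auto simp: mons_def)
    then have "c \<in> (\<Union>s\<in>D'. space s)"
      using c D' by (simp add: stanley_decomp_def adjoin_var_hyperplane)
    then obtain s where "s \<in> D'" "c \<in> space s"
      by blast
    moreover have "c \<in> space (slice_space n s)"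
      using space_slice_space[OF \<open>c \<in> space s\<close> \<open>c n = 0\<close>] \<open>c \<in> space s\<close> \<open>c n = 0\<close> by simp
    ultimately show ?thesis
      using \<open>c n = 0\<close> by blast
  qed
qed

lemma adjoin_var_psubset:
  assumes "I \<subseteq> mons n A" "J \<subset> I"
  shows "adjoin_var n laurent J \<subset> adjoin_var n laurent I"
proof -
  obtain c where "c \<in> I" "c \<notin> J"
    using assms(2) by blast
  moreover have "c n = 0"
    using \<open>c \<in> I\<close> assms(1) by (auto simp: mons_def)
  ultimately have "c \<in> adjoin_var n laurent I - adjoin_var n laurent J"
    by (simp add: adjoin_var_hyperplane)
  moreover have "adjoin_var n laurent J \<subseteq> adjoin_var n laurent I"
    using assms(2) by (auto simp: adjoin_var_def)
  ultimately show ?thesis by blast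
qed

lemma monomial_ideal_adjoin_var:
  assumes A: "A \<subseteq> {..<n}" and I: "monomial_ideal n A I"
  shows "monomial_ideal (Suc n) (if laurent then insert n A else A) (adjoin_var n laurent I)"
    (is "monomial_ideal _ ?A' ?I'")
proof -
  have I_mons: "I \<subseteq> mons n A"
    and I_mult: "\<And>a i. a \<in> I \<Longrightarrow> i < n \<Longrightarrow> (\<lambda>k. a k + unitv i k) \<in> I"
    and I_div: "\<And>a j. a \<in> I \<Longrightarrow> j \<in> A \<Longrightarrow> (\<lambda>k. a k - unitv j k) \<in> I"
    using I by (auto simp: monomial_ideal_def)
  have shift: "(\<lambda>k. c k + unitv i k)(n := 0) = (if i = n then c(n := 0) else (\<lambda>k. (c(n := 0)) k + unitv i k))"
    "(\<lambda>k. c k - unitv i k)(n := 0) = (if i = n then c(n := 0) else (\<lambda>k. (c(n := 0)) k - unitv i k))"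
    for c :: "nat \<Rightarrow> int" and i
    by (auto simp: unitv_def)
  have "c \<in> mons (Suc n) ?A'" if c: "c \<in> ?I'" for c
  proof -
    have c0: "c(n := 0) \<in> mons n A" and cn: "laurent \<or> 0 \<le> c n"
      using c I_mons by (auto simp: adjoin_var_def)
    show ?thesis
      unfolding mons_def
    proof (intro CollectI conjI allI impI)
      fix i assume "Suc n \<le> i"
      then show "c i = 0"
        using c0 by (auto simp: mons_def dest: spec[of _ i])
    next
      fix i assume "i < Suc n" "i \<notin> ?A'"
      then show "0 \<le> c i"
        using c0 cn A by (cases "i = n") (auto simp: mons_def split: if_splits)
    qed
  qed
  moreover have "(\<lambda>k. c k + unitv i k) \<in> ?I'" if c: "c \<in> ?I'" and i: "i < Suc n" for c i
  proof -
    have "(\<lambda>k. c k + unitv i k)(n := 0) \<in> I"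
      using c i I_mult[of "c(n := 0)" i] unfolding shift by (auto simp: adjoin_var_def)
    moreover have "laurent \<or> 0 \<le> c n + unitv i n"
      using c by (auto simp: adjoin_var_def unitv_def)
    ultimately show ?thesis
      by (simp add: adjoin_var_def)
  qed
  moreover have "(\<lambda>k. c k - unitv j k) \<in> ?I'" if c: "c \<in> ?I'" and j: "j \<in> ?A'" for c j
  proof -
    have "(\<lambda>k. c k - unitv j k)(n := 0) \<in> I"
      using c j I_div[of "c(n := 0)" j] A unfolding shift by (auto simp: adjoin_var_def split: if_splits)
    moreover have "laurent \<or> 0 \<le> c n - unitv j n"
      using c j A by (auto simp: adjoin_var_def unitv_def split: if_splits)
    ultimately show ?thesis
      by (simp add: adjoin_var_def)
  qed
  ultimately show ?thesis
    unfolding monomial_ideal_def by blast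
qed

lemma sdepth_adjoin_var:
  assumes A: "A \<subseteq> {..<n}" and I: "monomial_ideal n A I" and J: "monomial_ideal n A J" and JI: "J \<subset> I"
  shows "sdepth (Suc n) (if laurent then insert n A else A) (adjoin_var n laurent I) (adjoin_var n laurent J)
    = sdepth n A I J + 1"
proof (rule sdepth_eq_plus_1[OF A _ _ _ stanley_decomp_exists[OF A I J]])
  have IM: "I \<subseteq> mons n A"
    by (rule monomial_ideal_mons[OF I])
  show "(if laurent then insert n A else A) \<subseteq> {..<Suc n}"
    using A by auto
  show "I - J \<noteq> {}"
    using JI by blast
  show "adjoin_var n laurent I - adjoin_var n laurent J \<noteq> {}"
    using adjoin_var_psubset[OF IM JI] by blast
  show "\<exists>D'. stanley_decomp (Suc n) (if laurent then insert n A else A) (adjoin_var n laurent I)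
      (adjoin_var n laurent J) D' \<and> (\<forall>s'\<in>D'. \<exists>s\<in>D. sdim s + 1 \<le> sdim s')"
    if D: "stanley_decomp n A I J D" for D
  proof (intro exI conjI ballI)
    show "stanley_decomp (Suc n) (if laurent then insert n A else A) (adjoin_var n laurent I)
        (adjoin_var n laurent J) (case_prod (lift_space n) ` ({b. laurent \<or> b} \<times> D))"
      by (rule stanley_decomp_lift[OF A IM D])
    fix s' assume "s' \<in> case_prod (lift_space n) ` ({b. laurent \<or> b} \<times> D)"
    then obtain b s where "s \<in> D" "s' = lift_space n b s"
      by auto
    moreover have "stanley_space n A I J s"
      using D \<open>s \<in> D\<close> by (simp add: stanley_decomp_def)
    ultimately show "\<exists>s\<in>D. sdim s + 1 \<le> sdim s'"
      using sdim_lift_space[OF _ A IM] by auto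
  qed
  show "\<exists>D. stanley_decomp n A I J D \<and> (\<forall>s\<in>D. \<exists>s'\<in>D'. sdim s' \<le> sdim s + 1)"
    if D': "stanley_decomp (Suc n) (if laurent then insert n A else A) (adjoin_var n laurent I)
      (adjoin_var n laurent J) D'" for D'
  proof (intro exI conjI ballI)
    show "stanley_decomp n A I J (slice_space n ` {s \<in> D'. \<exists>c\<in>space s. c n = 0})"
      by (rule stanley_decomp_slice[OF _ IM D']) auto
    fix s assume "s \<in> slice_space n ` {s \<in> D'. \<exists>c\<in>space s. c n = 0}"
    then obtain t c where "t \<in> D'" "s = slice_space n t" "c \<in> space t" "c n = 0"
      by blast
    moreover have "stanley_space (Suc n) (if laurent then insert n A else A) (adjoin_var n laurent I)
        (adjoin_var n laurent J) t"
      using D' \<open>t \<in> D'\<close> by (simp add: stanley_decomp_def)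
    ultimately show "\<exists>s'\<in>D'. sdim s' \<le> sdim s + 1"
      using sdim_slice_space[where n=n] A finite_subset by (metis finite_insert finite_lessThan)
  qed
qed

lemma ext_poly_eq_adjoin_var:
  assumes "X \<subseteq> mons n A"
  shows "ext_poly n X = adjoin_var n False X"
proof -
  have "(\<lambda>i. if i = n then 0 else c i) = c(n := 0)" for c :: "nat \<Rightarrow> int"
    by auto
  moreover have "c i = 0" if "c(n := 0) \<in> X" "n < i" for c i
  proof -
    have "c(n := 0) \<in> mons n A"
      using that(1) assms by blast
    then show ?thesis
      using that(2) by (auto simp: mons_def dest: spec[of _ i])
  qed
  ultimately show ?thesis
    unfolding ext_poly_def adjoin_var_def by auto
qed

lemma ext_laurent_0:
  assumes "X \<subseteq> mons n A"
  shows "ext_laurent n 0 X = X"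
proof -
  have "(\<lambda>i. if i < n then c i else 0) = c" if "\<forall>i\<ge>n. c i = 0" for c :: "nat \<Rightarrow> int"
    using that by auto
  then show ?thesis
    using assms unfolding ext_laurent_def mons_def by fastforce
qed

lemma ext_laurent_Suc: "ext_laurent n (Suc r) X = adjoin_var (n + r) True (ext_laurent n r X)"
proof -
  have restrict: "(\<lambda>i. if i < n then (c(n + r := 0)) i else 0) = (\<lambda>i. if i < n then c i else 0)"
    for c :: "nat \<Rightarrow> int"
    by auto
  have zero: "(\<forall>i. n + Suc r \<le> i \<longrightarrow> c i = 0) \<longleftrightarrow> (\<forall>i. n + r \<le> i \<longrightarrow> (c(n + r := 0)) i = 0)"
    for c :: "nat \<Rightarrow> int"
  proof (intro iffI allI impI)
    fix i assume "\<forall>i. n + Suc r \<le> i \<longrightarrow> c i = 0" "n + r \<le> i"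
    then show "(c(n + r := 0)) i = 0"
      by (cases "i = n + r") auto
  next
    fix i assume "\<forall>i. n + r \<le> i \<longrightarrow> (c(n + r := 0)) i = 0" "n + Suc r \<le> i"
    then show "c i = 0"
      by (auto dest: spec[of _ i])
  qed
  show ?thesis
    unfolding ext_laurent_def adjoin_var_def mem_Collect_eq simp_thms restrict zero ..
qed

lemma monomial_ideal_ext_laurent:
  assumes "A \<subseteq> {..<n}" "monomial_ideal n A I"
  shows "monomial_ideal (n + r) (A \<union> {n..<n + r}) (ext_laurent n r I)"
proof (induction r)
  case 0
  then show ?case
    using assms(2) ext_laurent_0[OF monomial_ideal_mons[OF assms(2)]] by simp
next
  case (Suc r)
  have "A \<union> {n..<n + r} \<subseteq> {..<n + r}"
    using assms(1) by auto
  from monomial_ideal_adjoin_var[OF this Suc, where laurent=True]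
  show ?case
    by (simp add: ext_laurent_Suc atLeastLessThanSuc insert_commute)
qed

lemma ext_laurent_psubset:
  assumes "A \<subseteq> {..<n}" "monomial_ideal n A I" "J \<subset> I"
  shows "ext_laurent n r J \<subset> ext_laurent n r I"
proof (induction r)
  case 0
  have "J \<subseteq> mons n A"
    using assms(2,3) monomial_ideal_mons by blast
  then show ?case
    using assms(3) ext_laurent_0 monomial_ideal_mons[OF assms(2)] by metis
next
  case (Suc r)
  then show ?case
    unfolding ext_laurent_Suc
    by (intro adjoin_var_psubset[OF monomial_ideal_mons[OF monomial_ideal_ext_laurent[OF assms(1,2)]]])
qed

lemma sdepth_ext_laurent:
  assumes A: "A \<subseteq> {..<n}" and I: "monomial_ideal n A I" and J: "monomial_ideal n A J" and JI: "J \<subset> I"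
  shows "sdepth (n + r) (A \<union> {n..<n + r}) (ext_laurent n r I) (ext_laurent n r J) = sdepth n A I J + r"
proof (induction r)
  case 0
  show ?case
    by (simp add: ext_laurent_0[OF monomial_ideal_mons[OF I]] ext_laurent_0[OF monomial_ideal_mons[OF J]])
next
  case (Suc r)
  have "A \<union> {n..<n + r} \<subseteq> {..<n + r}"
    using A by auto
  from sdepth_adjoin_var[OF this monomial_ideal_ext_laurent[OF A I] monomial_ideal_ext_laurent[OF A J]
      ext_laurent_psubset[OF A I JI], where laurent=True]
  show ?case
    using Suc by (simp add: ext_laurent_Suc atLeastLessThanSuc insert_commute)
qed

theorem theorem4p1:
  fixes n :: nat and A :: "nat set" and I J :: "(nat \<Rightarrow> int) set"
  assumes "A \<subseteq> {..<n}"
    and "monomial_ideal n A I" and "monomial_ideal n A J" and "J \<subset> I"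
  shows "sdepth (Suc n) A (ext_poly n I) (ext_poly n J) = sdepth n A I J + 1 \<and>
         sdepth (Suc n) (insert n A) (ext_laurent n 1 I) (ext_laurent n 1 J) = sdepth n A I J + 1 \<and>
         (\<forall>r. sdepth (n + r) (A \<union> {n..<n + r}) (ext_laurent n r I) (ext_laurent n r J)
             = sdepth n A I J + r)"
proof (intro conjI allI)
  show "sdepth (Suc n) A (ext_poly n I) (ext_poly n J) = sdepth n A I J + 1"
    using sdepth_adjoin_var[OF assms, where laurent=False]
    by (simp add: ext_poly_eq_adjoin_var[OF monomial_ideal_mons[OF assms(2)]]
        ext_poly_eq_adjoin_var[OF monomial_ideal_mons[OF assms(3)]])
  show "sdepth (Suc n) (insert n A) (ext_laurent n 1 I) (ext_laurent n 1 J) = sdepth n A I J + 1"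
    using sdepth_ext_laurent[OF assms, of 1] by simp
  show "sdepth (n + r) (A \<union> {n..<n + r}) (ext_laurent n r I) (ext_laurent n r J) = sdepth n A I J + r" for r
    by (rule sdepth_ext_laurent[OF assms])
qed

end
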